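(* Let $n$ be a positive integer, let $f,g\in\mathcal{A}_n$ and let $\phi\in\mathcal{H}[1,n]$ with $\phi(0)=1$ and $\phi(z)\neq 0$ in $\mathbb{D}$. Let $h$ be a convex function in $\mathbb{D}$ with $h(0)=1$, and let $\beta,\alpha,\sigma$ be complex numbers with $\beta\neq 0$ and $\operatorname{Re}(\beta h(z)+\alpha)>0$ in $\mathbb{D}$. Suppose $$\beta\frac{zf'(z)}{f(z)}+\sigma\frac{zg'(z)}{g(z)}\prec \beta h(z)+\sigma.$$ If $F$ is defined by $$F(z)=\left(\frac{\beta+\alpha}{z^{\alpha}\phi(z)}\int_0^zf^{\beta}(t)g^{\sigma}(t)t^{\alpha-\sigma-1}\,dt\right)^{1/\beta},$$ then $F\in\mathcal{A}_n$ and $$\frac{zF'(z)}{F(z)}+\frac{1}{\beta}\frac{z\phi'(z)}{\phi(z)}\prec h(z).$$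
   Context: $\mathbb{D}$ is the open unit disk. $\mathcal{H}[1,n]$ is the class of functions analytic in $\mathbb{D}$ of the form $1+a_nz^n+\cdots$; $\mathcal{A}_n$ is the class of functions analytic in $\mathbb{D}$ of the form $z+a_{n+1}z^{n+1}+\cdots$. A convex function is a univalent analytic function mapping $\mathbb{D}$ onto a convex domain. $f\prec F$ means $f=F\circ\omega$ for some analytic $\omega:\mathbb{D}\to\mathbb{D}$ with $\omega(0)=0$. Complex powers are understood as the analytic branches normalized at the origin. *)

theory Defs
  imports "HOL-Complex_Analysis.Complex_Analysis"
begin

definition unit_disk :: "complex set" where
  "unit_disk = ball 0 1"

definition divz :: "(complex \<Rightarrow> complex) \<Rightarrow> complex \<Rightarrow> complex" where
  "divz f z = (if z = 0 then deriv f 0 else f z / z)"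

text \<open>The class A_n: analytic in the disk, of the form z + a_{n+1} z^{n+1} + ...\<close>
definition class_A :: "nat \<Rightarrow> (complex \<Rightarrow> complex) \<Rightarrow> bool" where
  "class_A n f \<longleftrightarrow> f holomorphic_on unit_disk \<and> f 0 = 0 \<and> deriv f 0 = 1 \<and>
      (\<forall>k\<in>{2..n}. (deriv ^^ k) f 0 = 0)"

text \<open>The class H[1,n]: analytic in the disk, of the form 1 + a_n z^n + ...\<close>
definition class_H1 :: "nat \<Rightarrow> (complex \<Rightarrow> complex) \<Rightarrow> bool" where
  "class_H1 n p \<longleftrightarrow> p holomorphic_on unit_disk \<and> p 0 = 1 \<and>
      (\<forall>k\<in>{1..<n}. (deriv ^^ k) p 0 = 0)"

definition convex_function :: "(complex \<Rightarrow> complex) \<Rightarrow> bool" where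
  "convex_function h \<longleftrightarrow> h holomorphic_on unit_disk \<and> inj_on h unit_disk \<and>
      convex (h ` unit_disk)"

definition subordinate :: "(complex \<Rightarrow> complex) \<Rightarrow> (complex \<Rightarrow> complex) \<Rightarrow> bool" where
  "subordinate f F \<longleftrightarrow> (\<exists>\<omega>. \<omega> holomorphic_on unit_disk \<and> \<omega> ` unit_disk \<subseteq> unit_disk \<and>
      \<omega> 0 = 0 \<and> (\<forall>z\<in>unit_disk. f z = F (\<omega> z)))"

text \<open>Analytic branch of log q normalized at the origin (for q nonvanishing analytic
  in the disk with q 0 = 1): integral of q'/q along the segment [0,z].\<close>
definition branch_log :: "(complex \<Rightarrow> complex) \<Rightarrow> complex \<Rightarrow> complex" where
  "branch_log q z = contour_integral (linepath 0 z) (\<lambda>w. deriv q w / q w)"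

definition branch_pow :: "(complex \<Rightarrow> complex) \<Rightarrow> complex \<Rightarrow> complex \<Rightarrow> complex" where
  "branch_pow q c z = exp (c * branch_log q z)"

text \<open>Writing f^\<beta>(t) = t^\<beta> (f(t)/t)^\<beta>,
  g^\<sigma>(t) = t^\<sigma> (g(t)/t)^\<sigma> and substituting t = s z, one gets
  F(z) = z * Q(z)^(1/\<beta>) with
  Q(z) = (\<beta>+\<alpha>)/\<phi>(z) * \<integral>_0^1 s^(\<beta>+\<alpha>-1) (f(sz)/(sz))^\<beta> (g(sz)/(sz))^\<sigma> ds,
  all branches normalized at the origin.\<close>
definition Q_op :: "complex \<Rightarrow> complex \<Rightarrow> complex \<Rightarrow> (complex \<Rightarrow> complex) \<Rightarrow>
    (complex \<Rightarrow> complex) \<Rightarrow> (complex \<Rightarrow> complex) \<Rightarrow> complex \<Rightarrow> complex" where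
  "Q_op \<beta> \<alpha> \<sigma> f g \<phi> z = (\<beta> + \<alpha>) / \<phi> z *
     integral {0..1} (\<lambda>s::real. of_real s powr (\<beta> + \<alpha> - 1) *
        branch_pow (divz f) \<beta> (of_real s * z) * branch_pow (divz g) \<sigma> (of_real s * z))"

definition F_op :: "complex \<Rightarrow> complex \<Rightarrow> complex \<Rightarrow> (complex \<Rightarrow> complex) \<Rightarrow>
    (complex \<Rightarrow> complex) \<Rightarrow> (complex \<Rightarrow> complex) \<Rightarrow> complex \<Rightarrow> complex" where
  "F_op \<beta> \<alpha> \<sigma> f g \<phi> z = z * branch_pow (Q_op \<beta> \<alpha> \<sigma> f g \<phi>) (1 / \<beta>) z"

end

theory Submission
  imports Defs
begin

text \<open>
  Put \<Phi> = (f/z) powr \<beta> * (g/z) powr \<sigma> and c = \<beta> + \<alpha>, and let I be the radial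
  integral of \<Phi> with weight s powr (c - 1), so that F = z (c I / \<phi>) powr (1/\<beta>) and
  z I' = \<Phi> - c I.  The hypothesis says that k = 1 + z \<Phi>' / (\<beta> \<Phi>) takes its values in the
  convex domain h(D).  Then p = I / \<Phi> solves the Briot-Bouquet equation
  z p' = 1 - (\<beta> k + \<alpha>) p, and looking at a first point where Re p vanishes (Jack's lemma)
  gives Re p > 0.  The expression z F'/F + z \<phi>'/(\<beta> \<phi>) equals P = (1/p - \<alpha>)/\<beta>, and
  P + p z P' = k lies in h(D).  If some P(z) were outside h(D), a half-plane containing h(D)
  but not P(z) would be left by P at a first point, where Jack's lemma contradicts
  P + p z P' \<in> h(D).  So P(D) \<subseteq> h(D), i.e. P \<prec> h since h is univalent.  Finally
  F \<in> A_n because vanishing of the Taylor coefficients of orders 1, ..., n - 1 at 0 survives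
  products, quotients, powers and the radial integral.
\<close>

lemma open_unit_disk [simp]: "open unit_disk"
  by (simp add: unit_disk_def)

lemma convex_unit_disk [simp]: "convex unit_disk"
  by (simp add: unit_disk_def)

lemma zero_in_unit_disk [simp]: "0 \<in> unit_disk"
  by (simp add: unit_disk_def)

lemma mem_unit_disk: "z \<in> unit_disk \<longleftrightarrow> norm z < 1"
  by (simp add: unit_disk_def)

lemma of_real_mult_in_unit_disk:
  assumes "s \<in> {0..1}" "z \<in> unit_disk"
  shows "of_real s * z \<in> unit_disk"
proof -
  have "norm (of_real s * z) \<le> norm z"
    using assms by (simp add: norm_mult mult_left_le_one_le)
  then show ?thesis
    using assms by (simp add: mem_unit_disk)
qed

lemma has_field_derivative_unit_disk:
  "f holomorphic_on unit_disk \<Longrightarrow> z \<in> unit_disk \<Longrightarrow> (f has_field_derivative deriv f z) (at z)"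
  by (rule holomorphic_derivI[OF _ open_unit_disk])

section \<open>Analytic branches and the quotient f(z)/z\<close>

lemma has_field_derivative_branch_log:
  assumes hol: "q holomorphic_on unit_disk" and nz: "\<forall>z\<in>unit_disk. q z \<noteq> 0"
    and z: "z \<in> unit_disk"
  shows "(branch_log q has_field_derivative deriv q z / q z) (at z)"
proof -
  let ?f = "\<lambda>w. deriv q w / q w"
  have holf: "?f holomorphic_on unit_disk"
    using hol nz by (intro holomorphic_intros holomorphic_deriv) auto
  have segment: "closed_segment 0 y \<subseteq> unit_disk" if "y \<in> unit_disk" for y
    using that by (simp add: closed_segment_subset)
  have triangle: "contour_integral (linepath 0 b) ?f + contour_integral (linepath b c) ?f +
        contour_integral (linepath c 0) ?f = 0" if "closed_segment b c \<subseteq> unit_disk" for b c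
  proof -
    have "convex hull {0, b, c} \<subseteq> unit_disk"
      using that ends_in_segment by (intro hull_minimal) auto
    then have "?f holomorphic_on convex hull {0, b, c}"
      using holf holomorphic_on_subset by blast
    then show ?thesis
      by (rule has_chain_integral_chain_integral3[OF Cauchy_theorem_triangle])
  qed
  show ?thesis
    unfolding branch_log_def
    by (rule triangle_contour_integrals_starlike_primitive[OF holomorphic_on_imp_continuous_on[OF holf]
          zero_in_unit_disk open_unit_disk z segment triangle])
qed

lemma has_field_derivative_branch_pow:
  assumes "q holomorphic_on unit_disk" "\<forall>z\<in>unit_disk. q z \<noteq> 0" "z \<in> unit_disk"
  shows "(branch_pow q c has_field_derivative c * (deriv q z / q z) * branch_pow q c z) (at z)"
  unfolding branch_pow_def
  using DERIV_chain2[OF DERIV_exp DERIV_cmult[OF has_field_derivative_branch_log[OF assms]]]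
  by (simp add: mult_ac)

lemma deriv_branch_pow:
  assumes "q holomorphic_on unit_disk" "\<forall>z\<in>unit_disk. q z \<noteq> 0" "z \<in> unit_disk"
  shows "deriv (branch_pow q c) z = c * (deriv q z / q z) * branch_pow q c z"
  by (rule DERIV_imp_deriv[OF has_field_derivative_branch_pow[OF assms]])

lemma holomorphic_on_branch_pow:
  assumes "q holomorphic_on unit_disk" "\<forall>z\<in>unit_disk. q z \<noteq> 0"
  shows "branch_pow q c holomorphic_on unit_disk"
  unfolding holomorphic_on_open[OF open_unit_disk]
  using has_field_derivative_branch_pow[OF assms] by blast

lemma branch_pow_0 [simp]: "branch_pow q c 0 = 1"
  by (simp add: branch_pow_def branch_log_def)

lemma branch_pow_nonzero [simp]: "branch_pow q c z \<noteq> 0"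
  by (simp add: branch_pow_def)

lemma logderiv_times_z_branch_pow:
  fixes c :: complex
  assumes Q: "Q holomorphic_on unit_disk" "\<forall>z\<in>unit_disk. Q z \<noteq> 0" and z: "z \<in> unit_disk"
  defines "F \<equiv> \<lambda>w. w * branch_pow Q c w"
  shows "deriv F z / divz F z = 1 + c * (z * deriv Q z / Q z)"
proof -
  have deriv_F: "deriv F w = branch_pow Q c w + w * deriv (branch_pow Q c) w" if "w \<in> unit_disk" for w
    unfolding F_def
    using DERIV_imp_deriv[OF DERIV_mult[OF DERIV_ident
        has_field_derivative_unit_disk[OF holomorphic_on_branch_pow[OF Q] that]]]
    by simp
  have "divz F z = branch_pow Q c z"
    using deriv_F[of 0] by (cases "z = 0") (auto simp: divz_def F_def)
  then show ?thesis
    using deriv_F[OF z] deriv_branch_pow[OF Q z] by (simp add: field_simps)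
qed

lemma divz_0: "divz f 0 = deriv f 0"
  by (simp add: divz_def)

lemma divz_eq: "z \<noteq> 0 \<Longrightarrow> divz f z = f z / z"
  by (simp add: divz_def)

lemma mult_divz: "f 0 = 0 \<Longrightarrow> z * divz f z = f z"
  by (cases "z = 0") (auto simp: divz_def)

lemma holomorphic_on_divz:
  assumes "f holomorphic_on unit_disk" "f 0 = 0"
  shows "divz f holomorphic_on unit_disk"
proof -
  have "(\<lambda>z. if z = 0 then deriv f 0 else (f z - f 0) / (z - 0)) holomorphic_on unit_disk"
    by (rule pole_lemma_open[OF assms(1) open_unit_disk])
  moreover have "(\<lambda>z. if z = 0 then deriv f 0 else (f z - f 0) / (z - 0)) = divz f"
    using assms(2) by (auto simp: divz_def)
  ultimately show ?thesis by simp
qed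

lemma divz_nonzero:
  assumes "deriv f 0 \<noteq> 0" "\<forall>z\<in>unit_disk - {0}. f z \<noteq> 0" "z \<in> unit_disk"
  shows "divz f z \<noteq> 0"
  using assms by (cases "z = 0") (auto simp: divz_def)

lemma deriv_divz:
  assumes "f holomorphic_on unit_disk" "z \<in> unit_disk" "z \<noteq> 0"
  shows "deriv (divz f) z = (z * deriv f z - f z) / z\<^sup>2"
proof -
  have "((\<lambda>w. f w / w) has_field_derivative (deriv f z * z - f z * 1) / (z * z)) (at z)"
    using assms by (intro DERIV_divide has_field_derivative_unit_disk DERIV_ident) auto
  then have "(divz f has_field_derivative (deriv f z * z - f z * 1) / (z * z)) (at z)"
    by (rule has_field_derivative_transform_within_open[where S="-{0}"])
       (use assms in \<open>auto simp: divz_eq\<close>)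
  then show ?thesis
    by (simp add: DERIV_imp_deriv power2_eq_square mult.commute)
qed

text \<open>Also valid at z = 0, where divz f 0 = deriv f 0 makes both sides vanish.\<close>
lemma z_deriv_branch_pow_divz:
  assumes f: "f holomorphic_on unit_disk" "f 0 = 0" "deriv f 0 \<noteq> 0"
    and nz: "\<forall>z\<in>unit_disk - {0}. f z \<noteq> 0" and z: "z \<in> unit_disk"
  shows "z * deriv (branch_pow (divz f) c) z
           = c * (deriv f z / divz f z - 1) * branch_pow (divz f) c z"
proof -
  have "z * deriv (branch_pow (divz f) c) z
          = c * (z * deriv (divz f) z / divz f z) * branch_pow (divz f) c z"
    using deriv_branch_pow[OF holomorphic_on_divz[OF f(1,2)]] divz_nonzero[OF f(3) nz] z by simp
  also have "z * deriv (divz f) z / divz f z = deriv f z / divz f z - 1"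
  proof (cases "z = 0")
    case True
    then show ?thesis using f(3) by (simp add: divz_0)
  next
    case False
    then show ?thesis
      using nz z by (simp add: deriv_divz[OF f(1) z] divz_eq field_simps power2_eq_square)
  qed
  finally show ?thesis .
qed

section \<open>Vanishing Taylor coefficients at the origin\<close>

text \<open>The Taylor coefficients of orders 1, ..., n - 1 at 0 vanish, i.e. f z = f 0 + O(z^n),
  the condition defining H[a,n].\<close>
definition flat_to_order :: "nat \<Rightarrow> (complex \<Rightarrow> complex) \<Rightarrow> bool" where
  "flat_to_order n f \<longleftrightarrow> (\<forall>k\<in>{1..<n}. (deriv ^^ k) f 0 = 0)"

lemma higher_deriv_Suc_at: "(deriv ^^ Suc k) f z = (deriv ^^ k) (deriv f) z"
  by (simp add: funpow_Suc_right del: funpow.simps)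

lemma higher_deriv_zero_of_mult:
  assumes A: "A holomorphic_on unit_disk" and V: "V holomorphic_on unit_disk"
    and W: "W holomorphic_on unit_disk"
    and eq: "\<And>z. z \<in> unit_disk \<Longrightarrow> A z * V z = W z" and V0: "V 0 \<noteq> 0"
    and W0: "\<forall>i<m. (deriv ^^ i) W 0 = 0"
  shows "\<forall>i<m. (deriv ^^ i) A 0 = 0"
proof (intro allI impI)
  fix i assume "i < m"
  then show "(deriv ^^ i) A 0 = 0"
  proof (induction i rule: less_induct)
    case (less i)
    have "(deriv ^^ i) W 0 = (deriv ^^ i) (\<lambda>z. A z * V z) 0"
      using A V W eq by (intro higher_deriv_transform_within_open[where S=unit_disk])
        (auto intro: holomorphic_intros)
    also have "\<dots> = (\<Sum>j = 0..i. of_nat (i choose j) * (deriv ^^ j) A 0 * (deriv ^^ (i-j)) V 0)"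
      by (rule higher_deriv_mult[OF A V open_unit_disk zero_in_unit_disk])
    also have "\<dots> = (deriv ^^ i) A 0 * V 0
        + (\<Sum>j<i. of_nat (i choose j) * (deriv ^^ j) A 0 * (deriv ^^ (i-j)) V 0)"
      by (simp add: atLeast0AtMost lessThan_Suc_atMost[symmetric])
    also have "(\<Sum>j<i. of_nat (i choose j) * (deriv ^^ j) A 0 * (deriv ^^ (i-j)) V 0) = 0"
      using less by (intro sum.neutral) auto
    finally show ?case
      using W0 V0 less by simp
  qed
qed

lemma flat_to_order_cmult:
  assumes "f holomorphic_on unit_disk" "flat_to_order n f"
  shows "flat_to_order n (\<lambda>z. c * f z)"
  using assms by (simp add: flat_to_order_def higher_deriv_cmult[OF assms(1) _ open_unit_disk])

lemma flat_to_order_mult: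
  assumes f: "f holomorphic_on unit_disk" and g: "g holomorphic_on unit_disk"
    and "flat_to_order n f" "flat_to_order n g"
  shows "flat_to_order n (\<lambda>z. f z * g z)"
  unfolding flat_to_order_def
proof
  fix k assume k: "k \<in> {1..<n}"
  have "(deriv ^^ k) (\<lambda>z. f z * g z) 0
      = (\<Sum>i = 0..k. of_nat (k choose i) * (deriv ^^ i) f 0 * (deriv ^^ (k-i)) g 0)"
    by (rule higher_deriv_mult[OF f g open_unit_disk zero_in_unit_disk])
  also have "\<dots> = 0"
  proof (intro sum.neutral ballI)
    fix i assume "i \<in> {0..k}"
    then show "of_nat (k choose i) * (deriv ^^ i) f 0 * (deriv ^^ (k-i)) g 0 = 0"
      using assms(3,4) k by (cases "i = 0") (auto simp: flat_to_order_def)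
  qed
  finally show "(deriv ^^ k) (\<lambda>z. f z * g z) 0 = 0" .
qed

lemma flat_to_order_divide:
  assumes A: "A holomorphic_on unit_disk" and B: "B holomorphic_on unit_disk"
    and nz: "\<forall>z\<in>unit_disk. B z \<noteq> 0"
    and "flat_to_order n A" "flat_to_order n B"
  shows "flat_to_order n (\<lambda>z. A z / B z)"
  unfolding flat_to_order_def
proof
  fix k assume k: "k \<in> {1..<n}"
  define R where "R = (\<lambda>z. A z / B z)"
  have R: "R holomorphic_on unit_disk"
    unfolding R_def using A B nz by (intro holomorphic_intros) auto
  have "\<forall>i<n. (deriv ^^ i) (\<lambda>z. R z - R 0) 0 = 0"
  proof (rule higher_deriv_zero_of_mult[OF _ B])
    show "\<forall>i<n. (deriv ^^ i) (\<lambda>z. A z - R 0 * B z) 0 = 0"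
    proof (intro allI impI)
      fix i assume "i < n"
      show "(deriv ^^ i) (\<lambda>z. A z - R 0 * B z) 0 = 0"
      proof (cases "i = 0")
        case True
        then show ?thesis using nz by (simp add: R_def)
      next
        case False
        have "(deriv ^^ i) (\<lambda>z. A z - R 0 * B z) 0 = (deriv ^^ i) A 0 - R 0 * (deriv ^^ i) B 0"
          using A B by (simp add: higher_deriv_diff[OF A _ open_unit_disk]
              higher_deriv_cmult[OF B _ open_unit_disk] holomorphic_intros)
        then show ?thesis
          using assms(4,5) False \<open>i < n\<close> by (simp add: flat_to_order_def)
      qed
    qed
  qed (use R A B nz in \<open>auto simp: R_def field_simps intro!: holomorphic_intros\<close>)
  then have "(deriv ^^ k) R 0 - (deriv ^^ k) (\<lambda>z. R 0) 0 = 0"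
    using k higher_deriv_diff[OF R holomorphic_on_const open_unit_disk zero_in_unit_disk, of k "R 0"]
    by auto
  then show "(deriv ^^ k) (\<lambda>z. A z / B z) 0 = 0"
    using k by (simp add: R_def)
qed

lemma flat_to_order_of_deriv_eq:
  assumes A: "A holomorphic_on unit_disk" and E: "E holomorphic_on unit_disk"
    and eq: "\<And>z. z \<in> unit_disk \<Longrightarrow> deriv E z = A z * E z"
    and A0: "\<forall>i<m. (deriv ^^ i) A 0 = 0"
  shows "flat_to_order (Suc m) E"
  unfolding flat_to_order_def
proof
  fix k assume "k \<in> {1..<Suc m}"
  then obtain j where j: "k = Suc j" "j < m" by (cases k) auto
  have "(deriv ^^ k) E 0 = (deriv ^^ j) (\<lambda>z. A z * E z) 0"
    using j A E eq by (simp only: higher_deriv_Suc_at)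
      (rule higher_deriv_transform_within_open[where S=unit_disk],
        auto intro!: holomorphic_intros holomorphic_deriv)
  also have "\<dots> = (\<Sum>i = 0..j. of_nat (j choose i) * (deriv ^^ i) A 0 * (deriv ^^ (j-i)) E 0)"
    by (rule higher_deriv_mult[OF A E open_unit_disk zero_in_unit_disk])
  also have "\<dots> = 0"
    using A0 j by (intro sum.neutral) auto
  finally show "(deriv ^^ k) E 0 = 0" .
qed

lemma flat_to_order_branch_pow:
  assumes q: "q holomorphic_on unit_disk" and nz: "\<forall>z\<in>unit_disk. q z \<noteq> 0"
    and flat: "flat_to_order n q" and n: "n \<ge> 1"
  shows "flat_to_order n (branch_pow q c)"
proof -
  define A where "A = (\<lambda>z. c * (deriv q z / q z))"
  have dq: "deriv q holomorphic_on unit_disk"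
    using q by (intro holomorphic_deriv) auto
  have "\<forall>i<n - 1. (deriv ^^ i) A 0 = 0"
  proof (rule higher_deriv_zero_of_mult[OF _ q])
    show "\<forall>i<n - 1. (deriv ^^ i) (\<lambda>z. c * deriv q z) 0 = 0"
      using flat
      by (auto simp: flat_to_order_def higher_deriv_cmult[OF dq] higher_deriv_Suc_at[symmetric]
          simp del: funpow.simps)
  qed (use nz dq q in \<open>auto simp: A_def intro!: holomorphic_intros\<close>)
  then have "flat_to_order (Suc (n - 1)) (branch_pow q c)"
    using q nz dq
    by (intro flat_to_order_of_deriv_eq[where A=A])
       (auto simp: A_def deriv_branch_pow holomorphic_on_branch_pow intro!: holomorphic_intros)
  then show ?thesis
    using n by simp
qed

lemma higher_deriv_times_z:
  assumes E: "E holomorphic_on unit_disk" and k: "k \<ge> 1"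
  shows "(deriv ^^ k) (\<lambda>z. z * E z) 0 = of_nat k * (deriv ^^ (k - 1)) E 0"
proof -
  have "(deriv ^^ k) (\<lambda>z. z * E z) 0
      = (\<Sum>i = 0..k. of_nat (k choose i) * (deriv ^^ i) (\<lambda>z. z) 0 * (deriv ^^ (k-i)) E 0)"
    by (rule higher_deriv_mult[OF holomorphic_on_ident E open_unit_disk zero_in_unit_disk])
  also have "\<dots> = (\<Sum>i = 0..k. if i = 1 then of_nat k * (deriv ^^ (k - 1)) E 0 else 0)"
    by (intro sum.cong) auto
  also have "\<dots> = of_nat k * (deriv ^^ (k - 1)) E 0"
    using k by (simp add: sum.delta)
  finally show ?thesis .
qed

lemma flat_to_order_divz:
  assumes "class_A n f"
  shows "flat_to_order n (divz f)"
  unfolding flat_to_order_def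
proof
  fix k assume k: "k \<in> {1..<n}"
  have f: "f holomorphic_on unit_disk" "f 0 = 0"
    using assms by (auto simp: class_A_def)
  have d: "divz f holomorphic_on unit_disk"
    by (rule holomorphic_on_divz[OF f])
  have "of_nat (Suc k) * (deriv ^^ k) (divz f) 0 = (deriv ^^ Suc k) (\<lambda>z. z * divz f z) 0"
    using higher_deriv_times_z[OF d, of "Suc k"] by simp
  also have "\<dots> = (deriv ^^ Suc k) f 0"
    using f d by (simp add: mult_divz)
  also have "\<dots> = 0"
    using assms k by (auto simp: class_A_def simp del: funpow.simps)
  finally show "(deriv ^^ k) (divz f) 0 = 0"
    by (simp del: of_nat_Suc)
qed

lemma class_A_times_z:
  assumes E: "E holomorphic_on unit_disk" and "E 0 = 1" and flat: "flat_to_order n E"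
  shows "class_A n (\<lambda>z. z * E z)"
  unfolding class_A_def
proof (intro conjI ballI)
  show "(\<lambda>z. z * E z) holomorphic_on unit_disk"
    using E by (intro holomorphic_intros)
  show "deriv (\<lambda>z. z * E z) 0 = 1"
    using higher_deriv_times_z[OF E, of 1] \<open>E 0 = 1\<close> by simp
  fix k assume k: "k \<in> {2..n}"
  then have "k - 1 \<in> {1..<n}" by auto
  then show "(deriv ^^ k) (\<lambda>z. z * E z) 0 = 0"
    using flat k by (simp add: higher_deriv_times_z[OF E] flat_to_order_def)
qed simp

section \<open>The weighted radial integral\<close>

text \<open>For z \<noteq> 0 this is z powr (-c) times the integral of t powr (c - 1) * G t
  along [0, z].\<close>
definition radial_integral :: "complex \<Rightarrow> (complex \<Rightarrow> complex) \<Rightarrow> complex \<Rightarrow> complex" where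
  "radial_integral c G z = integral {0..1} (\<lambda>s::real. of_real s powr (c - 1) * G (of_real s * z))"

lemma continuous_on_of_real_powr:
  assumes "Re c > 0"
  shows "continuous_on {0..1} (\<lambda>s::real. complex_of_real s powr c)"
  by (rule continuous_on_powr_complex) (use assms in \<open>auto intro!: continuous_intros\<close>)

lemma has_vector_derivative_of_real_powr:
  assumes "s > 0"
  shows "((\<lambda>s::real. complex_of_real s powr c) has_vector_derivative c * of_real s powr (c - 1)) (at s)"
proof -
  have "of_real s \<notin> \<real>\<^sub>\<le>\<^sub>0"
    using assms by (auto simp: complex_nonpos_Reals_iff)
  then show ?thesis
    by (intro has_vector_derivative_real_field has_field_derivative_powr)
qed

lemma has_integral_of_real_powr:
  assumes "Re c > 0"
  shows "((\<lambda>s::real. complex_of_real s powr (c - 1)) has_integral 1 / c) {0..1}"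
proof -
  have "((\<lambda>s. c * of_real s powr (c - 1) / c) has_integral
      (complex_of_real 1 powr c / c - complex_of_real 0 powr c / c)) {0..1}"
  proof (rule fundamental_theorem_of_calculus_interior_strong[where S="{}"])
    show "continuous_on {0..1} (\<lambda>s::real. complex_of_real s powr c / c)"
      using continuous_on_mult_right[OF continuous_on_of_real_powr[OF assms], of "inverse c"]
      by (simp add: divide_inverse)
    fix x :: real assume "x \<in> {0<..<1} - {}"
    then show "((\<lambda>s. complex_of_real s powr c / c) has_vector_derivative
        c * of_real x powr (c - 1) / c) (at x)"
      using has_vector_derivative_of_real_powr[of x c] by (intro derivative_eq_intros) auto
  qed auto
  moreover have "c \<noteq> 0"
    using assms by auto
  ultimately show ?thesis
    by simp
qed

lemma of_real_powr_minus_one_mult: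
  assumes "s \<ge> 0"
  shows "complex_of_real s powr (c - 1) * of_real s = of_real s powr c"
proof (cases "s = 0")
  case False
  then show ?thesis
    using powr_add[of "complex_of_real s" "c - 1" 1] by simp
qed auto

lemma continuous_on_along_radius:
  assumes "continuous_on unit_disk G" "z \<in> unit_disk"
  shows "continuous_on {0..1} (\<lambda>s::real. G (of_real s * z))"
  using assms of_real_mult_in_unit_disk
  by (intro continuous_on_compose2[OF assms(1)] continuous_intros) auto

lemma radial_integral_integrable:
  assumes c: "Re c > 0" and G: "G holomorphic_on unit_disk" and z: "z \<in> unit_disk"
  shows "(\<lambda>s::real. of_real s powr (c - 1) * G (of_real s * z)) integrable_on {0..1}"
proof -
  define G1 where "G1 = (\<lambda>w. if w = 0 then deriv G 0 else (G w - G 0) / (w - 0))"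
  have G1: "G1 holomorphic_on unit_disk"
    unfolding G1_def by (rule pole_lemma_open[OF G open_unit_disk])
  have G_eq: "G w = G 0 + w * G1 w" for w
    by (cases "w = 0") (auto simp: G1_def)
  have "(\<lambda>s::real. G 0 * of_real s powr (c - 1)) integrable_on {0..1}"
    using has_integral_of_real_powr[OF c] by (intro integrable_on_mult_right) blast
  moreover have "(\<lambda>s::real. z * (of_real s powr c * G1 (of_real s * z))) integrable_on {0..1}"
    using G1 z
    by (intro integrable_on_mult_right integrable_continuous_interval continuous_on_mult
        continuous_on_of_real_powr[OF c] continuous_on_along_radius holomorphic_on_imp_continuous_on)
  ultimately have "(\<lambda>s::real. G 0 * of_real s powr (c - 1)
      + z * (of_real s powr c * G1 (of_real s * z))) integrable_on {0..1}"
    by (rule integrable_add)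
  then show ?thesis
  proof (rule integrable_spike[OF _ negligible_empty])
    fix s :: real assume "s \<in> {0..1} - {}"
    show "of_real s powr (c - 1) * G (of_real s * z) =
        G 0 * of_real s powr (c - 1) + z * (of_real s powr c * G1 (of_real s * z))"
    proof -
      have "s \<ge> 0" using \<open>s \<in> {0..1} - {}\<close> by simp
      then show ?thesis
        by (subst G_eq) (simp add: algebra_simps of_real_powr_minus_one_mult[of s c, symmetric])
    qed
  qed
qed

lemma has_field_derivative_radial_integral:
  assumes c: "Re c > 0" and G: "G holomorphic_on unit_disk" and z: "z \<in> unit_disk"
  shows "(radial_integral c G has_field_derivative radial_integral (c + 1) (deriv G) z) (at z)"
proof -
  have dG: "deriv G holomorphic_on unit_disk"
    using G by (intro holomorphic_deriv) auto
  have "((\<lambda>x. integral (cbox 0 1) (\<lambda>t::real. of_real t powr (c - 1) * G (of_real t * x)))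
      has_field_derivative integral (cbox 0 1) (\<lambda>t. of_real t powr c * deriv G (of_real t * z)))
      (at z within unit_disk)"
  proof (rule leibniz_rule_field_derivative[where U=unit_disk])
    fix x and t :: real assume x: "x \<in> unit_disk" and t: "t \<in> cbox 0 1"
    have "((\<lambda>x. G (of_real t * x)) has_field_derivative deriv G (of_real t * x) * of_real t) (at x)"
      using DERIV_chain2[OF has_field_derivative_unit_disk[OF G] DERIV_cmult[OF DERIV_ident]]
        of_real_mult_in_unit_disk t x by simp
    then have "((\<lambda>x. of_real t powr (c - 1) * G (of_real t * x)) has_field_derivative
        of_real t powr (c - 1) * (deriv G (of_real t * x) * of_real t)) (at x)"
      by (rule DERIV_cmult)
    moreover have "of_real t powr (c - 1) * (deriv G (of_real t * x) * of_real t)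
        = of_real t powr c * deriv G (of_real t * x)"
      using t of_real_powr_minus_one_mult[of t c] by (simp add: mult_ac)
    ultimately show "((\<lambda>x. of_real t powr (c - 1) * G (of_real t * x)) has_field_derivative
        of_real t powr c * deriv G (of_real t * x)) (at x within unit_disk)"
      by (simp add: has_field_derivative_at_within)
  next
    fix x assume "x \<in> unit_disk"
    then show "(\<lambda>t::real. of_real t powr (c - 1) * G (of_real t * x)) integrable_on cbox 0 1"
      using radial_integral_integrable[OF c G] by simp
  next
    have "continuous_on (unit_disk \<times> cbox 0 1) ((\<lambda>t::real. of_real t powr c) \<circ> snd)"
      by (rule continuous_on_compose[OF continuous_on_snd[OF continuous_on_id]
          continuous_on_subset[OF continuous_on_of_real_powr[OF c]]]) auto
    moreover have
      "continuous_on (unit_disk \<times> cbox 0 1) (deriv G \<circ> (\<lambda>p. of_real (snd p) * fst p))"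
      using dG of_real_mult_in_unit_disk
      by (intro continuous_on_compose continuous_intros)
         (auto intro: continuous_on_subset[OF holomorphic_on_imp_continuous_on[OF dG]])
    ultimately show "continuous_on (unit_disk \<times> cbox 0 1)
        (\<lambda>(x, t::real). of_real t powr c * deriv G (of_real t * x))"
      using continuous_on_mult by (fastforce simp: o_def case_prod_beta)
  qed (use z in auto)
  then show ?thesis
    by (simp add: radial_integral_def[abs_def] at_within_open[OF z open_unit_disk] flip: interval_cbox)
qed

lemma holomorphic_on_radial_integral:
  assumes "Re c > 0" "G holomorphic_on unit_disk"
  shows "radial_integral c G holomorphic_on unit_disk"
  unfolding holomorphic_on_open[OF open_unit_disk]
  using has_field_derivative_radial_integral[OF assms] by blast

lemma radial_integral_0:
  assumes "Re c > 0"
  shows "radial_integral c G 0 = G 0 / c"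
  using integral_unique[OF has_integral_mult_left[OF has_integral_of_real_powr[OF assms], of "G 0"]]
  by (simp add: radial_integral_def)

lemma z_deriv_radial_integral:
  assumes c: "Re c > 0" and G: "G holomorphic_on unit_disk" and z: "z \<in> unit_disk"
  shows "z * deriv (radial_integral c G) z = G z - c * radial_integral c G z"
proof -
  have "((\<lambda>s. c * of_real s powr (c - 1) * G (of_real s * z)
        + of_real s powr c * (deriv G (of_real s * z) * z))
     has_integral (complex_of_real 1 powr c * G (of_real 1 * z)
        - complex_of_real 0 powr c * G (of_real 0 * z))) {0..1}"
  proof (rule fundamental_theorem_of_calculus_interior_strong[where S="{}"])
    show "continuous_on {0..1} (\<lambda>s::real. of_real s powr c * G (of_real s * z))"
      using G z by (intro continuous_on_mult continuous_on_of_real_powr[OF c] continuous_on_along_radius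
          holomorphic_on_imp_continuous_on)
    fix x :: real assume "x \<in> {0<..<1} - {}"
    then have x: "x > 0" "x \<in> {0..1}" by auto
    have "((\<lambda>s::real. of_real s * z) has_vector_derivative z) (at x)"
      using has_vector_derivative_real_field[OF DERIV_cmult_right[OF DERIV_ident]] by simp
    from field_vector_diff_chain_at[OF this
        has_field_derivative_unit_disk[OF G of_real_mult_in_unit_disk[OF x(2) z]]]
    have "((\<lambda>s::real. G (of_real s * z)) has_vector_derivative z * deriv G (of_real x * z)) (at x)"
      by (simp add: o_def)
    from has_vector_derivative_mult[OF has_vector_derivative_of_real_powr[OF x(1)] this]
    show "((\<lambda>s::real. of_real s powr c * G (of_real s * z)) has_vector_derivative
       c * of_real x powr (c - 1) * G (of_real x * z)
         + of_real x powr c * (deriv G (of_real x * z) * z)) (at x)"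
      by (simp add: algebra_simps)
  qed auto
  then have "((\<lambda>s. c * (of_real s powr (c - 1) * G (of_real s * z))
      + z * (of_real s powr (c + 1 - 1) * deriv G (of_real s * z))) has_integral G z) {0..1}"
    using c by (simp add: algebra_simps)
  moreover have "((\<lambda>s. c * (of_real s powr (c - 1) * G (of_real s * z))
      + z * (of_real s powr (c + 1 - 1) * deriv G (of_real s * z)))
      has_integral (c * radial_integral c G z + z * radial_integral (c + 1) (deriv G) z)) {0..1}"
  proof -
    have "Re (c + 1) > 0" "deriv G holomorphic_on unit_disk"
      using c G by (auto intro: holomorphic_deriv)
    then show ?thesis
      unfolding radial_integral_def
      by (intro has_integral_add has_integral_mult_right integrable_integral
          radial_integral_integrable[OF c G z] radial_integral_integrable[OF _ _ z])
  qed
  ultimately have "G z = c * radial_integral c G z + z * radial_integral (c + 1) (deriv G) z"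
    by (rule has_integral_unique)
  then show ?thesis
    using DERIV_imp_deriv[OF has_field_derivative_radial_integral[OF c G z]] by (simp add: algebra_simps)
qed

lemma z_deriv_radial_integral_div:
  assumes c: "Re c > 0" and \<Phi>: "\<Phi> holomorphic_on unit_disk" "\<forall>z\<in>unit_disk. \<Phi> z \<noteq> 0"
    and z: "z \<in> unit_disk"
  shows "z * deriv (\<lambda>w. radial_integral c \<Phi> w / \<Phi> w) z
           = 1 - (c + z * deriv \<Phi> z / \<Phi> z) * (radial_integral c \<Phi> z / \<Phi> z)"
proof -
  let ?I = "radial_integral c \<Phi>"
  have "deriv (\<lambda>w. ?I w / \<Phi> w) z = (deriv ?I z * \<Phi> z - ?I z * deriv \<Phi> z) / (\<Phi> z * \<Phi> z)"
    using z \<Phi> holomorphic_on_radial_integral[OF c \<Phi>(1)]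
    by (intro DERIV_imp_deriv DERIV_divide has_field_derivative_unit_disk) auto
  then have "z * deriv (\<lambda>w. ?I w / \<Phi> w) z
      = (z * deriv ?I z * \<Phi> z - ?I z * (z * deriv \<Phi> z)) / (\<Phi> z * \<Phi> z)"
    by (simp add: algebra_simps)
  also have "\<dots> = ((\<Phi> z - c * ?I z) * \<Phi> z - ?I z * (z * deriv \<Phi> z)) / (\<Phi> z * \<Phi> z)"
    by (simp only: z_deriv_radial_integral[OF c \<Phi>(1) z])
  also have "\<dots> = 1 - (c + z * deriv \<Phi> z / \<Phi> z) * (?I z / \<Phi> z)"
    using \<Phi>(2) z by (simp add: field_simps)
  finally show ?thesis .
qed

lemma z_logderiv_radial_integral_div:
  assumes c: "Re c > 0" and \<Phi>: "\<Phi> holomorphic_on unit_disk"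
    and \<phi>: "\<phi> holomorphic_on unit_disk" "\<forall>z\<in>unit_disk. \<phi> z \<noteq> 0"
    and z: "z \<in> unit_disk" and I: "radial_integral c \<Phi> z \<noteq> 0"
  defines "Q \<equiv> \<lambda>w. c * radial_integral c \<Phi> w / \<phi> w"
  shows "z * deriv Q z / Q z = \<Phi> z / radial_integral c \<Phi> z - c - z * deriv \<phi> z / \<phi> z"
proof -
  let ?I = "radial_integral c \<Phi>"
  have "(Q has_field_derivative (c * deriv ?I z * \<phi> z - c * ?I z * deriv \<phi> z) / (\<phi> z * \<phi> z)) (at z)"
    unfolding Q_def using \<phi> z holomorphic_on_radial_integral[OF c \<Phi>]
    by (intro DERIV_divide DERIV_cmult has_field_derivative_unit_disk) auto
  moreover have "c \<noteq> 0"
    using c by auto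
  ultimately have "z * deriv Q z / Q z = z * deriv ?I z / ?I z - z * deriv \<phi> z / \<phi> z"
    using \<phi>(2) z I by (simp add: DERIV_imp_deriv Q_def field_simps)
  also have "z * deriv ?I z = \<Phi> z - c * ?I z"
    by (rule z_deriv_radial_integral[OF c \<Phi> z])
  finally show ?thesis
    using I by (simp add: field_simps)
qed

lemma higher_deriv_radial_integral:
  assumes "Re c > 0" "G holomorphic_on unit_disk" "z \<in> unit_disk"
  shows "(deriv ^^ k) (radial_integral c G) z = radial_integral (c + of_nat k) ((deriv ^^ k) G) z"
  using assms
proof (induction k arbitrary: c G z)
  case (Suc k)
  have c: "Re (c + 1) > 0" and dG: "deriv G holomorphic_on unit_disk"
    using Suc.prems by (auto intro: holomorphic_deriv)
  have "(deriv ^^ Suc k) (radial_integral c G) z = (deriv ^^ k) (deriv (radial_integral c G)) z"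
    by (rule higher_deriv_Suc_at)
  also have "\<dots> = (deriv ^^ k) (radial_integral (c + 1) (deriv G)) z"
    using Suc.prems holomorphic_on_radial_integral[OF c dG]
    by (intro higher_deriv_transform_within_open[OF _ _ open_unit_disk])
       (auto intro: holomorphic_deriv holomorphic_on_radial_integral
          DERIV_imp_deriv[OF has_field_derivative_radial_integral])
  also have "\<dots> = radial_integral (c + 1 + of_nat k) ((deriv ^^ k) (deriv G)) z"
    by (rule Suc.IH[OF c dG Suc.prems(3)])
  finally show ?case
    by (simp add: funpow_Suc_right add_ac del: funpow.simps)
qed simp

lemma flat_to_order_radial_integral:
  assumes c: "Re c > 0" and G: "G holomorphic_on unit_disk" and flat: "flat_to_order n G"
  shows "flat_to_order n (radial_integral c G)"
  unfolding flat_to_order_def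
proof
  fix k assume "k \<in> {1..<n}"
  moreover have "Re (c + of_nat k) > 0"
    using c by simp
  ultimately show "(deriv ^^ k) (radial_integral c G) 0 = 0"
    using flat by (simp add: higher_deriv_radial_integral[OF c G] radial_integral_0 flat_to_order_def)
qed

section \<open>Jack's lemma and first-order differential subordination\<close>

lemma Re_deriv_mult_nonpos_at_max:
  assumes G: "(G has_field_derivative D) (at 0)" and "e > 0"
    and max: "\<And>t. 0 < t \<Longrightarrow> t < e \<Longrightarrow> Re (G (of_real t * u)) \<le> Re (G 0)"
  shows "Re (D * u) \<le> 0"
proof (rule ccontr)
  assume "\<not> Re (D * u) \<le> 0"
  then have pos: "Re (D * u) > 0"
    by simp
  have "((\<lambda>w. G (w * u)) has_field_derivative D * u) (at 0)"
    using DERIV_chain2[where f=G and g="\<lambda>w. w * u" and x=0, OF _ DERIV_cmult_right[OF DERIV_ident]] G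
    by simp
  then have "((\<lambda>t::real. G (of_real t * u)) has_vector_derivative D * u) (at 0)"
    using has_vector_derivative_real_field[of "\<lambda>w. G (w * u)" _ 0] by simp
  then have "((\<lambda>t::real. Re (G (of_real t * u))) has_real_derivative Re (D * u)) (at 0)"
    unfolding has_real_derivative_iff_has_vector_derivative
    by (rule bounded_linear.has_vector_derivative[OF bounded_linear_Re])
  from DERIV_pos_inc_right[OF this pos] obtain d where "d > 0"
    and d: "\<forall>t>0. t < d \<longrightarrow> Re (G (of_real 0 * u)) < Re (G (of_real (0 + t) * u))"
    by blast
  define t where "t = min d e / 2"
  have "0 < t" "t < d" "t < e"
    using \<open>d > 0\<close> \<open>e > 0\<close> by (auto simp: t_def)
  with d max show False
    by force
qed

text \<open>Compare z0 with exp w * z0, Re w \<le> 0, in the directions w = -t, i t and -i t.\<close>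
lemma deriv_at_Re_max:
  assumes F: "F holomorphic_on unit_disk" and z0: "z0 \<in> unit_disk"
    and max: "\<forall>z. norm z \<le> norm z0 \<longrightarrow> Re (F z) \<le> Re (F z0)"
  shows "Im (z0 * deriv F z0) = 0 \<and> Re (z0 * deriv F z0) \<ge> 0"
proof -
  have "(F has_field_derivative deriv F z0) (at (exp 0 * z0))"
    using has_field_derivative_unit_disk[OF F z0] by simp
  from DERIV_chain2[where g="\<lambda>w. exp w * z0", OF this DERIV_cmult_right[OF DERIV_exp]]
  have G: "((\<lambda>w. F (exp w * z0)) has_field_derivative deriv F z0 * z0) (at 0)"
    by simp
  have le: "Re (deriv F z0 * z0 * u) \<le> 0" if "Re u \<le> 0" for u
  proof (rule Re_deriv_mult_nonpos_at_max[OF G zero_less_one])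
    fix t :: real assume "0 < t"
    then have "norm (exp (of_real t * u) * z0) \<le> norm z0"
      using that by (simp add: norm_mult mult_le_0_iff mult_left_le_one_le)
    then show "Re (F (exp (of_real t * u) * z0)) \<le> Re (F (exp 0 * z0))"
      using max by simp
  qed
  from le[of "-1"] le[of \<i>] le[of "-\<i>"] show ?thesis
    by (simp add: algebra_simps)
qed

lemma first_level_point:
  fixes u :: "complex \<Rightarrow> real"
  assumes cont: "continuous_on unit_disk u" and "u 0 < d"
    and z1: "z1 \<in> unit_disk" "u z1 \<ge> d"
  obtains z0 where "z0 \<in> unit_disk" "u z0 = d" "\<forall>z. norm z \<le> norm z0 \<longrightarrow> u z \<le> d"
proof -
  have cball: "cball 0 (norm z1) \<subseteq> unit_disk"
    using z1 by (auto simp: mem_unit_disk)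
  define K where "K = {z \<in> cball 0 (norm z1). d \<le> u z}"
  have "closed K"
    unfolding K_def using cont cball
    by (intro continuous_on_closed_Collect_le continuous_on_subset[OF cont]) auto
  moreover have "K = cball 0 (norm z1) \<inter> K"
    by (auto simp: K_def)
  ultimately have "compact K"
    by (metis compact_Int_closed compact_cball)
  moreover have "K \<noteq> {}"
    using z1 by (auto simp: K_def)
  ultimately obtain z0 where "z0 \<in> K" and min: "\<forall>y\<in>K. norm z0 \<le> norm y"
    using continuous_attains_inf[OF _ _ continuous_on_norm_id[of K]] by blast
  then have z0: "z0 \<in> unit_disk" "u z0 \<ge> d" "norm z0 \<le> norm z1"
    using cball by (auto simp: K_def)
  then have "z0 \<noteq> 0"
    using \<open>u 0 < d\<close> by auto
  have less: "u z < d" if "norm z < norm z0" for z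
  proof (rule ccontr)
    assume "\<not> u z < d"
    then have "z \<in> K"
      using that z0(3) by (auto simp: K_def)
    then show False
      using min that by force
  qed
  have "ball 0 (norm z0) \<subseteq> {z \<in> cball 0 (norm z0). u z \<le> d}"
    using less by fastforce
  moreover have "closed {z \<in> cball 0 (norm z0). u z \<le> d}"
    using cball z0 by (intro continuous_on_closed_Collect_le continuous_on_subset[OF cont]) auto
  ultimately have "closure (ball 0 (norm z0)) \<subseteq> {z \<in> cball 0 (norm z0). u z \<le> d}"
    by (rule closure_minimal)
  then have "cball 0 (norm z0) \<subseteq> {z \<in> cball 0 (norm z0). u z \<le> d}"
    using \<open>z0 \<noteq> 0\<close> by (simp add: closure_ball)
  then show ?thesis
    using that z0 by fastforce
qed

lemma jack_lemma_Re:
  assumes F: "F holomorphic_on unit_disk" and "Re (F 0) < b"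
    and "z1 \<in> unit_disk" "Re (F z1) \<ge> b"
  obtains z0 where "z0 \<in> unit_disk" "Re (F z0) = b"
    "Im (z0 * deriv F z0) = 0" "Re (z0 * deriv F z0) \<ge> 0"
proof -
  have "continuous_on unit_disk (\<lambda>z. Re (F z))"
    using F holomorphic_on_imp_continuous_on by (intro continuous_intros) auto
  then obtain z0 where "z0 \<in> unit_disk" "Re (F z0) = b" "\<forall>z. norm z \<le> norm z0 \<longrightarrow> Re (F z) \<le> b"
    using first_level_point[OF _ assms(2-4)] by blast
  then show ?thesis
    using that deriv_at_Re_max[OF F] by auto
qed

text \<open>At a first point where Re p = 0, Jack's lemma makes z p' real and \<le> 0.  Writing p = i y
  there, Im (1 - H p) = - Re H * y forces y = 0, and then z p' = 1.\<close>
lemma Re_pos_of_briot_bouquet: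
  assumes p: "p holomorphic_on unit_disk" and "Re (p 0) > 0"
    and H: "\<forall>z\<in>unit_disk. Re (H z) > 0"
    and ode: "\<forall>z\<in>unit_disk. z * deriv p z = 1 - H z * p z"
  shows "\<forall>z\<in>unit_disk. Re (p z) > 0"
proof (rule ccontr)
  assume "\<not> ?thesis"
  then obtain z1 where "z1 \<in> unit_disk" "Re (- p z1) \<ge> 0"
    by (auto simp: not_less)
  moreover have "(\<lambda>z. - p z) holomorphic_on unit_disk"
    using p by (intro holomorphic_intros)
  ultimately obtain z0 where z0: "z0 \<in> unit_disk" "Re (p z0) = 0"
      and deriv: "Im (z0 * deriv (\<lambda>z. - p z) z0) = 0" "Re (z0 * deriv (\<lambda>z. - p z) z0) \<ge> 0"
    using jack_lemma_Re[of "\<lambda>z. - p z" 0] \<open>Re (p 0) > 0\<close> by auto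
  have "deriv (\<lambda>z. - p z) z0 = - deriv p z0"
    using p z0 by (intro deriv_minus holomorphic_on_imp_differentiable_at) auto
  then have "Im (1 - H z0 * p z0) = 0" "Re (1 - H z0 * p z0) \<le> 0"
    using deriv ode z0 by auto
  moreover have "Re (H z0) > 0"
    using H z0 by auto
  ultimately show False
    using z0 by simp
qed

text \<open>At a first point where Re (a P) reaches b, Jack's lemma makes a z P' real and nonnegative,
  so Re (a p z P') \<ge> 0 there.\<close>
lemma Re_bound_of_differential:
  assumes P: "P holomorphic_on unit_disk" and pos: "\<forall>z\<in>unit_disk. Re (p z) > 0"
    and bound: "\<forall>z\<in>unit_disk. Re (a * (P z + p z * (z * deriv P z))) < b"
    and "Re (a * P 0) < b"
  shows "\<forall>z\<in>unit_disk. Re (a * P z) < b"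
proof (rule ccontr)
  assume "\<not> ?thesis"
  then obtain z1 where "z1 \<in> unit_disk" "Re (a * P z1) \<ge> b"
    by (auto simp: not_less)
  moreover have "(\<lambda>z. a * P z) holomorphic_on unit_disk"
    using P by (intro holomorphic_intros)
  ultimately obtain z0 where z0: "z0 \<in> unit_disk" "Re (a * P z0) = b"
      and deriv: "Im (z0 * deriv (\<lambda>z. a * P z) z0) = 0" "Re (z0 * deriv (\<lambda>z. a * P z) z0) \<ge> 0"
    using jack_lemma_Re[of "\<lambda>z. a * P z" b] \<open>Re (a * P 0) < b\<close> by auto
  define m where "m = z0 * (a * deriv P z0)"
  have "deriv (\<lambda>z. a * P z) z0 = a * deriv P z0"
    using P z0 by (intro deriv_cmult holomorphic_on_imp_differentiable_at) auto
  then have m: "Im m = 0" "Re m \<ge> 0"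
    using deriv by (auto simp: m_def)
  have "a * (P z0 + p z0 * (z0 * deriv P z0)) = a * P z0 + p z0 * m"
    by (simp add: m_def algebra_simps)
  then have "Re (a * (P z0 + p z0 * (z0 * deriv P z0))) = b + Re (p z0) * Re m"
    using z0(2) m(1) by simp
  moreover have "Re (p z0) * Re m \<ge> 0"
    using pos z0(1) m(2) by (simp add: less_imp_le)
  ultimately show False
    using bound z0 by force
qed

lemma separating_halfplane_open_convex:
  fixes S :: "complex set"
  assumes "open S" "convex S" "y \<notin> S"
  obtains a b where "\<forall>x\<in>S. Re (a * x) < b" "Re (a * y) \<ge> b"
proof (cases "S = {}")
  case True
  then show ?thesis
    using that[of 0 0] by simp
next
  case False
  then obtain a b where "a \<noteq> 0" and le: "\<forall>x\<in>S. inner a x \<le> b" and "inner a y \<ge> b"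
    using separating_hyperplane_sets[of S "{y}"] assms by auto
  have "inner a x < b" if "x \<in> S" for x
  proof -
    obtain e where "e > 0" "ball x e \<subseteq> S"
      using assms(1) \<open>x \<in> S\<close> open_contains_ball by blast
    define t where "t = e / (2 * norm a)"
    have "t > 0"
      using \<open>e > 0\<close> \<open>a \<noteq> 0\<close> by (simp add: t_def)
    have "norm (of_real t * a) = t * norm a"
      using \<open>t > 0\<close> by (simp add: norm_mult)
    also have "\<dots> < e"
      using \<open>e > 0\<close> \<open>a \<noteq> 0\<close> by (simp add: t_def)
    finally have "x + of_real t * a \<in> ball x e"
      by (simp add: dist_norm)
    then have "inner a (x + of_real t * a) \<le> b"
      using le \<open>ball x e \<subseteq> S\<close> by blast
    moreover have "inner a (x + of_real t * a) = inner a x + t * inner a a"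
      by (simp add: inner_add_right inner_complex_def algebra_simps)
    moreover have "t * inner a a > 0"
      using \<open>t > 0\<close> \<open>a \<noteq> 0\<close> by simp
    ultimately show ?thesis
      by linarith
  qed
  then show ?thesis
    using that[of "cnj a" b] \<open>inner a y \<ge> b\<close> by (simp add: inner_complex_def)
qed

lemma subordinate_eq_on_unit_disk:
  "subordinate f h \<Longrightarrow> (\<And>z. z \<in> unit_disk \<Longrightarrow> f z = g z) \<Longrightarrow> subordinate g h"
  unfolding subordinate_def by metis

lemma subordinate_affine_cancel:
  "\<beta> \<noteq> 0 \<Longrightarrow> subordinate (\<lambda>z. \<beta> * f z + \<sigma>) (\<lambda>z. \<beta> * F z + \<sigma>) \<Longrightarrow> subordinate f F"
  by (simp add: subordinate_def)

lemma subordinate_of_image: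
  assumes h: "h holomorphic_on unit_disk" "inj_on h unit_disk"
    and P: "P holomorphic_on unit_disk" "P 0 = h 0"
    and image: "P ` unit_disk \<subseteq> h ` unit_disk"
  shows "subordinate P h"
proof -
  obtain g where g: "g holomorphic_on (h ` unit_disk)"
      and inv: "\<And>z. z \<in> unit_disk \<Longrightarrow> g (h z) = z"
    by (rule holomorphic_has_inverse[OF h(1) open_unit_disk h(2)]) blast
  have inverse: "g (P z) \<in> unit_disk \<and> h (g (P z)) = P z" if "z \<in> unit_disk" for z
  proof -
    have "P z \<in> h ` unit_disk"
      using image imageI[OF that] by (rule subsetD)
    then obtain y where "y \<in> unit_disk" "P z = h y"
      by blast
    then show ?thesis
      using inv by simp
  qed
  show ?thesis
    unfolding subordinate_def
  proof (intro exI conjI)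
    show "(g \<circ> P) holomorphic_on unit_disk"
      by (rule holomorphic_on_compose_gen[OF P(1) g image])
    show "(g \<circ> P) ` unit_disk \<subseteq> unit_disk" "\<forall>z\<in>unit_disk. P z = h ((g \<circ> P) z)"
      using inverse by auto
    show "(g \<circ> P) 0 = 0"
      using inv P(2) by simp
  qed
qed

lemma differential_subordination_convex:
  assumes h: "convex_function h"
    and P: "P holomorphic_on unit_disk" "P 0 = h 0"
    and pos: "\<forall>z\<in>unit_disk. Re (p z) > 0"
    and image: "\<forall>z\<in>unit_disk. P z + p z * (z * deriv P z) \<in> h ` unit_disk"
  shows "subordinate P h"
proof -
  have hol: "h holomorphic_on unit_disk" and inj: "inj_on h unit_disk"
    and convex: "convex (h ` unit_disk)"
    using h by (auto simp: convex_function_def)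
  have "P z \<in> h ` unit_disk" if z: "z \<in> unit_disk" for z
  proof (rule ccontr)
    assume "P z \<notin> h ` unit_disk"
    then obtain a b where sep: "\<forall>x\<in>h ` unit_disk. Re (a * x) < b" "Re (a * P z) \<ge> b"
      by (rule separating_halfplane_open_convex[OF open_mapping_thm3[OF hol open_unit_disk inj] convex])
    have "\<forall>z\<in>unit_disk. Re (a * P z) < b"
    proof (rule Re_bound_of_differential[OF P(1) pos])
      show "\<forall>w\<in>unit_disk. Re (a * (P w + p w * (w * deriv P w))) < b"
      proof
        fix w assume "w \<in> unit_disk"
        then have "P w + p w * (w * deriv P w) \<in> h ` unit_disk"
          by (rule image[rule_format])
        then show "Re (a * (P w + p w * (w * deriv P w))) < b"
          by (rule sep(1)[rule_format])
      qed
      show "Re (a * P 0) < b"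
        using sep(1)[rule_format, of "h 0"] P(2) by simp
    qed
    then show False
      using sep(2) z by (meson not_le)
  qed
  then show ?thesis
    using subordinate_of_image[OF hol inj P] by blast
qed

lemma Re_radial_integral_div_pos:
  assumes \<Phi>: "\<Phi> holomorphic_on unit_disk" "\<forall>z\<in>unit_disk. \<Phi> z \<noteq> 0"
    and pos: "\<forall>z\<in>unit_disk. Re (c + z * deriv \<Phi> z / \<Phi> z) > 0"
  shows "\<forall>z\<in>unit_disk. Re (radial_integral c \<Phi> z / \<Phi> z) > 0"
proof (rule Re_pos_of_briot_bouquet)
  have c: "Re c > 0"
    using pos[rule_format, OF zero_in_unit_disk] by simp
  then show "(\<lambda>z. radial_integral c \<Phi> z / \<Phi> z) holomorphic_on unit_disk"
    using \<Phi> by (intro holomorphic_intros holomorphic_on_radial_integral) auto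
  show "Re (radial_integral c \<Phi> 0 / \<Phi> 0) > 0"
    using c \<Phi>(2) by (simp add: radial_integral_0 Re_complex_div_gt_0)
  show "\<forall>z\<in>unit_disk. z * deriv (\<lambda>z. radial_integral c \<Phi> z / \<Phi> z) z
      = 1 - (c + z * deriv \<Phi> z / \<Phi> z) * (radial_integral c \<Phi> z / \<Phi> z)"
    using z_deriv_radial_integral_div[OF c \<Phi>] by blast
qed (use pos in auto)

lemma radial_integral_differential_identity:
  assumes "\<beta> \<noteq> 0" and c: "Re (\<beta> + \<alpha>) > 0"
    and \<Phi>: "\<Phi> holomorphic_on unit_disk" "\<forall>z\<in>unit_disk. \<Phi> z \<noteq> 0"
    and I: "\<forall>z\<in>unit_disk. radial_integral (\<beta> + \<alpha>) \<Phi> z \<noteq> 0" and z: "z \<in> unit_disk"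
  defines "p \<equiv> \<lambda>z. radial_integral (\<beta> + \<alpha>) \<Phi> z / \<Phi> z"
    and "P \<equiv> \<lambda>z. (\<Phi> z / radial_integral (\<beta> + \<alpha>) \<Phi> z - \<alpha>) / \<beta>"
  shows "P z + p z * (z * deriv P z) = 1 + z * deriv \<Phi> z / (\<beta> * \<Phi> z)"
proof -
  have p: "p holomorphic_on unit_disk"
    unfolding p_def using c \<Phi> by (intro holomorphic_intros holomorphic_on_radial_integral) auto
  have p_nonzero: "p z \<noteq> 0"
    using I \<Phi>(2) z by (simp add: p_def)
  have P_eq: "P = (\<lambda>z. (1 / p z - \<alpha>) / \<beta>)"
    by (simp add: P_def p_def)
  have "(P has_field_derivative ((0 * p z - 1 * deriv p z) / (p z * p z) - 0) / \<beta>) (at z)"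
    unfolding P_eq using p_nonzero z
    by (intro DERIV_cdivide DERIV_diff DERIV_divide DERIV_const has_field_derivative_unit_disk p)
  then have "p z * (z * deriv P z) = - (z * deriv p z) / (p z * \<beta>)"
    using p_nonzero by (simp add: DERIV_imp_deriv field_simps)
  also have "z * deriv p z = 1 - ((\<beta> + \<alpha>) + z * deriv \<Phi> z / \<Phi> z) * p z"
    unfolding p_def by (rule z_deriv_radial_integral_div[OF c \<Phi> z])
  finally have "P z + p z * (z * deriv P z) = ((\<beta> + \<alpha>) + z * deriv \<Phi> z / \<Phi> z - \<alpha>) / \<beta>"
    using p_nonzero \<open>\<beta> \<noteq> 0\<close> by (simp add: P_eq field_simps)
  also have "\<dots> = 1 + z * deriv \<Phi> z / (\<beta> * \<Phi> z)"
    using \<Phi>(2) z \<open>\<beta> \<noteq> 0\<close> by (simp add: field_simps)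
  finally show ?thesis .
qed

lemma radial_integral_subordinate:
  assumes h: "convex_function h" "h 0 = 1" and "\<beta> \<noteq> 0"
    and Re_pos: "\<forall>z\<in>unit_disk. Re (\<beta> * h z + \<alpha>) > 0"
    and \<Phi>: "\<Phi> holomorphic_on unit_disk" "\<forall>z\<in>unit_disk. \<Phi> z \<noteq> 0"
    and sub: "subordinate (\<lambda>z. 1 + z * deriv \<Phi> z / (\<beta> * \<Phi> z)) h"
  shows "\<forall>z\<in>unit_disk. Re (radial_integral (\<beta> + \<alpha>) \<Phi> z / \<Phi> z) > 0"
    and "subordinate (\<lambda>z. (\<Phi> z / radial_integral (\<beta> + \<alpha>) \<Phi> z - \<alpha>) / \<beta>) h"
proof -
  have image: "\<forall>z\<in>unit_disk. 1 + z * deriv \<Phi> z / (\<beta> * \<Phi> z) \<in> h ` unit_disk"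
    using sub unfolding subordinate_def by blast
  have c: "Re (\<beta> + \<alpha>) > 0"
    using Re_pos[rule_format, OF zero_in_unit_disk] h(2) by simp
  have H: "(\<beta> + \<alpha>) + z * deriv \<Phi> z / \<Phi> z = \<beta> * (1 + z * deriv \<Phi> z / (\<beta> * \<Phi> z)) + \<alpha>" for z
    using \<open>\<beta> \<noteq> 0\<close> by (simp add: field_simps)
  have "\<forall>z\<in>unit_disk. Re ((\<beta> + \<alpha>) + z * deriv \<Phi> z / \<Phi> z) > 0"
    using image Re_pos unfolding H by fastforce
  then show pos: "\<forall>z\<in>unit_disk. Re (radial_integral (\<beta> + \<alpha>) \<Phi> z / \<Phi> z) > 0"
    by (rule Re_radial_integral_div_pos[OF \<Phi>])
  then have I: "\<forall>z\<in>unit_disk. radial_integral (\<beta> + \<alpha>) \<Phi> z \<noteq> 0"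
    by fastforce
  show "subordinate (\<lambda>z. (\<Phi> z / radial_integral (\<beta> + \<alpha>) \<Phi> z - \<alpha>) / \<beta>) h"
  proof (rule differential_subordination_convex[OF h(1) _ _ pos])
    show "(\<lambda>z. (\<Phi> z / radial_integral (\<beta> + \<alpha>) \<Phi> z - \<alpha>) / \<beta>) holomorphic_on unit_disk"
      using c \<Phi> I by (intro holomorphic_intros holomorphic_on_radial_integral) auto
    show "(\<Phi> 0 / radial_integral (\<beta> + \<alpha>) \<Phi> 0 - \<alpha>) / \<beta> = h 0"
      using c \<Phi>(2) \<open>\<beta> \<noteq> 0\<close> h(2) by (simp add: radial_integral_0 field_simps)
    show "\<forall>z\<in>unit_disk. (\<Phi> z / radial_integral (\<beta> + \<alpha>) \<Phi> z - \<alpha>) / \<beta>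
        + radial_integral (\<beta> + \<alpha>) \<Phi> z / \<Phi> z
          * (z * deriv (\<lambda>z. (\<Phi> z / radial_integral (\<beta> + \<alpha>) \<Phi> z - \<alpha>) / \<beta>) z)
        \<in> h ` unit_disk"
      using image radial_integral_differential_identity[OF \<open>\<beta> \<noteq> 0\<close> c \<Phi> I] by simp
  qed
qed

section \<open>The integral operator\<close>

text \<open>The operator of the theorem, with the integrand (f/z) powr \<beta> * (g/z) powr \<sigma>
  replaced by \<Phi>.\<close>
definition integral_operator ::
    "complex \<Rightarrow> complex \<Rightarrow> (complex \<Rightarrow> complex) \<Rightarrow> (complex \<Rightarrow> complex) \<Rightarrow> complex \<Rightarrow> complex" where
  "integral_operator \<beta> \<alpha> \<Phi> \<phi> z =
     z * branch_pow (\<lambda>w. (\<beta> + \<alpha>) * radial_integral (\<beta> + \<alpha>) \<Phi> w / \<phi> w) (1 / \<beta>) z"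

lemma F_op_eq_integral_operator:
  "F_op \<beta> \<alpha> \<sigma> f g \<phi>
     = integral_operator \<beta> \<alpha> (\<lambda>z. branch_pow (divz f) \<beta> z * branch_pow (divz g) \<sigma> z) \<phi>"
proof -
  have "Q_op \<beta> \<alpha> \<sigma> f g \<phi> = (\<lambda>w. (\<beta> + \<alpha>)
      * radial_integral (\<beta> + \<alpha>) (\<lambda>z. branch_pow (divz f) \<beta> z * branch_pow (divz g) \<sigma> z) w / \<phi> w)"
    by (intro ext) (simp add: Q_op_def radial_integral_def mult.assoc)
  then show ?thesis
    by (intro ext) (simp add: F_op_def integral_operator_def)
qed

lemma class_A_integral_operator:
  assumes "n \<ge> 1" and c: "Re (\<beta> + \<alpha>) > 0"
    and \<Phi>: "\<Phi> holomorphic_on unit_disk" "flat_to_order n \<Phi>"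
    and \<phi>: "\<phi> holomorphic_on unit_disk" "\<forall>z\<in>unit_disk. \<phi> z \<noteq> 0" "flat_to_order n \<phi>"
    and I: "\<forall>z\<in>unit_disk. radial_integral (\<beta> + \<alpha>) \<Phi> z \<noteq> 0"
  shows "class_A n (integral_operator \<beta> \<alpha> \<Phi> \<phi>)"
proof -
  define Q where "Q = (\<lambda>w. (\<beta> + \<alpha>) * radial_integral (\<beta> + \<alpha>) \<Phi> w / \<phi> w)"
  have "radial_integral (\<beta> + \<alpha>) \<Phi> holomorphic_on unit_disk"
    "flat_to_order n (radial_integral (\<beta> + \<alpha>) \<Phi>)"
    using c \<Phi> by (auto intro: holomorphic_on_radial_integral flat_to_order_radial_integral)
  moreover have "\<beta> + \<alpha> \<noteq> 0"
    using c by (metis less_irrefl zero_complex.sel(1))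
  ultimately have Q: "Q holomorphic_on unit_disk" "\<forall>z\<in>unit_disk. Q z \<noteq> 0" "flat_to_order n Q"
    unfolding Q_def using \<phi> I
    by (auto intro!: holomorphic_intros flat_to_order_divide flat_to_order_cmult)
  have "class_A n (\<lambda>z. z * branch_pow Q (1 / \<beta>) z)"
    using Q \<open>n \<ge> 1\<close> by (intro class_A_times_z holomorphic_on_branch_pow flat_to_order_branch_pow) auto
  then show ?thesis
    unfolding Q_def integral_operator_def[abs_def] .
qed

lemma logderiv_integral_operator:
  assumes "\<beta> \<noteq> 0" and c: "Re (\<beta> + \<alpha>) > 0" and \<Phi>: "\<Phi> holomorphic_on unit_disk"
    and \<phi>: "\<phi> holomorphic_on unit_disk" "\<forall>z\<in>unit_disk. \<phi> z \<noteq> 0"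
    and I: "\<forall>z\<in>unit_disk. radial_integral (\<beta> + \<alpha>) \<Phi> z \<noteq> 0" and z: "z \<in> unit_disk"
  shows "deriv (integral_operator \<beta> \<alpha> \<Phi> \<phi>) z / divz (integral_operator \<beta> \<alpha> \<Phi> \<phi>) z
           + (1 / \<beta>) * (z * deriv \<phi> z / \<phi> z)
         = (\<Phi> z / radial_integral (\<beta> + \<alpha>) \<Phi> z - \<alpha>) / \<beta>"
proof -
  define Q where "Q = (\<lambda>w. (\<beta> + \<alpha>) * radial_integral (\<beta> + \<alpha>) \<Phi> w / \<phi> w)"
  have "\<beta> + \<alpha> \<noteq> 0"
    using c by (metis less_irrefl zero_complex.sel(1))
  then have Q: "Q holomorphic_on unit_disk" "\<forall>z\<in>unit_disk. Q z \<noteq> 0"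
    unfolding Q_def using c \<Phi> \<phi> I
    by (auto intro!: holomorphic_intros holomorphic_on_radial_integral)
  have "z * deriv Q z / Q z
      = \<Phi> z / radial_integral (\<beta> + \<alpha>) \<Phi> z - (\<beta> + \<alpha>) - z * deriv \<phi> z / \<phi> z"
    unfolding Q_def using I z by (intro z_logderiv_radial_integral_div[OF c \<Phi> \<phi> z]) auto
  then show ?thesis
    using logderiv_times_z_branch_pow[OF Q z, of "1 / \<beta>"] I z \<open>\<beta> \<noteq> 0\<close>
    by (simp add: integral_operator_def[abs_def] flip: Q_def) (simp add: field_simps)
qed

theorem integral_operator_subordination:
  assumes "n \<ge> 1" and h: "convex_function h" "h 0 = 1" and "\<beta> \<noteq> 0"
    and Re_pos: "\<forall>z\<in>unit_disk. Re (\<beta> * h z + \<alpha>) > 0"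
    and \<Phi>: "\<Phi> holomorphic_on unit_disk" "flat_to_order n \<Phi>" "\<forall>z\<in>unit_disk. \<Phi> z \<noteq> 0"
    and \<phi>: "\<phi> holomorphic_on unit_disk" "flat_to_order n \<phi>" "\<forall>z\<in>unit_disk. \<phi> z \<noteq> 0"
    and sub: "subordinate (\<lambda>z. 1 + z * deriv \<Phi> z / (\<beta> * \<Phi> z)) h"
  defines "F \<equiv> integral_operator \<beta> \<alpha> \<Phi> \<phi>"
  shows "class_A n F \<and>
    subordinate (\<lambda>z. deriv F z / divz F z + (1 / \<beta>) * (z * deriv \<phi> z / \<phi> z)) h"
proof -
  note subordinate = radial_integral_subordinate[OF h \<open>\<beta> \<noteq> 0\<close> Re_pos \<Phi>(1,3) sub]
  have I: "\<forall>z\<in>unit_disk. radial_integral (\<beta> + \<alpha>) \<Phi> z \<noteq> 0"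
    using subordinate(1) by fastforce
  have c: "Re (\<beta> + \<alpha>) > 0"
    using Re_pos[rule_format, OF zero_in_unit_disk] h(2) by simp
  from subordinate(2)
  have "subordinate (\<lambda>z. deriv F z / divz F z + (1 / \<beta>) * (z * deriv \<phi> z / \<phi> z)) h"
    unfolding F_def by (rule subordinate_eq_on_unit_disk)
      (metis logderiv_integral_operator[OF \<open>\<beta> \<noteq> 0\<close> c \<Phi>(1) \<phi>(1,3) I])
  moreover have "class_A n F"
    unfolding F_def by (rule class_A_integral_operator[OF \<open>n \<ge> 1\<close> c \<Phi>(1,2) \<phi>(1,3,2) I])
  ultimately show ?thesis
    by blast
qed

lemma branch_pow_divz_product:
  fixes a b :: complex
  assumes f: "class_A n f" "\<forall>z\<in>unit_disk - {0}. f z \<noteq> 0"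
    and g: "class_A n g" "\<forall>z\<in>unit_disk - {0}. g z \<noteq> 0" and "n \<ge> 1"
    and \<Phi>_def: "\<Phi> = (\<lambda>z. branch_pow (divz f) a z * branch_pow (divz g) b z)"
  shows "\<Phi> holomorphic_on unit_disk" "flat_to_order n \<Phi>" "\<forall>z\<in>unit_disk. \<Phi> z \<noteq> 0"
    and "\<forall>z\<in>unit_disk. a * (deriv f z / divz f z) + b * (deriv g z / divz g z)
           = a + b + z * deriv \<Phi> z / \<Phi> z"
proof -
  have hol: "f holomorphic_on unit_disk" "f 0 = 0" "deriv f 0 = 1"
    "g holomorphic_on unit_disk" "g 0 = 0" "deriv g 0 = 1"
    using f g by (auto simp: class_A_def)
  have divz: "divz f holomorphic_on unit_disk" "\<forall>z\<in>unit_disk. divz f z \<noteq> 0"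
    "divz g holomorphic_on unit_disk" "\<forall>z\<in>unit_disk. divz g z \<noteq> 0"
    using hol f(2) g(2) divz_nonzero[of f] divz_nonzero[of g] by (auto intro: holomorphic_on_divz)
  have pow: "branch_pow (divz f) a holomorphic_on unit_disk" "branch_pow (divz g) b holomorphic_on unit_disk"
    using divz by (auto intro: holomorphic_on_branch_pow)
  then show "\<Phi> holomorphic_on unit_disk"
    unfolding \<Phi>_def by (intro holomorphic_intros)
  show "flat_to_order n \<Phi>"
    unfolding \<Phi>_def using divz pow \<open>n \<ge> 1\<close> f(1) g(1)
    by (intro flat_to_order_mult flat_to_order_branch_pow flat_to_order_divz)
  show nonzero: "\<forall>z\<in>unit_disk. \<Phi> z \<noteq> 0"
    by (simp add: \<Phi>_def)
  show "\<forall>z\<in>unit_disk. a * (deriv f z / divz f z) + b * (deriv g z / divz g z)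
      = a + b + z * deriv \<Phi> z / \<Phi> z"
  proof
    fix z assume z: "z \<in> unit_disk"
    let ?F = "branch_pow (divz f) a" and ?G = "branch_pow (divz g) b"
    have "deriv \<Phi> z = deriv ?F z * ?G z + deriv ?G z * ?F z"
      unfolding \<Phi>_def
      by (intro DERIV_imp_deriv DERIV_mult has_field_derivative_unit_disk pow z)
    then have "z * deriv \<Phi> z = (z * deriv ?F z) * ?G z + (z * deriv ?G z) * ?F z"
      by (simp add: algebra_simps)
    also have "\<dots> = a * (deriv f z / divz f z - 1) * ?F z * ?G z
        + b * (deriv g z / divz g z - 1) * ?G z * ?F z"
      using z_deriv_branch_pow_divz[OF hol(1,2) _ f(2) z, of a]
        z_deriv_branch_pow_divz[OF hol(4,5) _ g(2) z, of b] hol(3,6)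
      by simp
    also have "\<dots> = (a * (deriv f z / divz f z) + b * (deriv g z / divz g z) - a - b) * \<Phi> z"
      by (simp add: \<Phi>_def algebra_simps)
    finally show "a * (deriv f z / divz f z) + b * (deriv g z / divz g z)
        = a + b + z * deriv \<Phi> z / \<Phi> z"
      using nonzero z by (simp add: field_simps)
  qed
qed

theorem mainTheorem6:
  fixes n :: nat and f g \<phi> h :: "complex \<Rightarrow> complex" and \<beta> \<alpha> \<sigma> :: complex
  assumes "n \<ge> 1"
    and "class_A n f" and "class_A n g"
    and "\<forall>z\<in>unit_disk - {0}. f z \<noteq> 0 \<and> g z \<noteq> 0"
    and "class_H1 n \<phi>" and "\<phi> 0 = 1" and "\<forall>z\<in>unit_disk. \<phi> z \<noteq> 0"
    and "convex_function h" and "h 0 = 1"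
    and "\<beta> \<noteq> 0"
    and "\<forall>z\<in>unit_disk. Re (\<beta> * h z + \<alpha>) > 0"
    and "subordinate (\<lambda>z. \<beta> * (deriv f z / divz f z) + \<sigma> * (deriv g z / divz g z))
                     (\<lambda>z. \<beta> * h z + \<sigma>)"
  shows "class_A n (F_op \<beta> \<alpha> \<sigma> f g \<phi>) \<and>
    subordinate (\<lambda>z. deriv (F_op \<beta> \<alpha> \<sigma> f g \<phi>) z / divz (F_op \<beta> \<alpha> \<sigma> f g \<phi>) z
                     + (1 / \<beta>) * (z * deriv \<phi> z / \<phi> z)) h"
proof -
  define \<Phi> where "\<Phi> = (\<lambda>z. branch_pow (divz f) \<beta> z * branch_pow (divz g) \<sigma> z)"
  have "\<forall>z\<in>unit_disk - {0}. f z \<noteq> 0" "\<forall>z\<in>unit_disk - {0}. g z \<noteq> 0"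
    using assms(4) by auto
  note \<Phi> = branch_pow_divz_product[OF assms(2) this(1) assms(3) this(2) assms(1) \<Phi>_def]
  have "\<beta> * (deriv f z / divz f z) + \<sigma> * (deriv g z / divz g z)
      = \<beta> * (1 + z * deriv \<Phi> z / (\<beta> * \<Phi> z)) + \<sigma>" if "z \<in> unit_disk" for z
    using \<Phi>(4) that assms(10) by (simp add: field_simps)
  with assms(12) have "subordinate (\<lambda>z. \<beta> * (1 + z * deriv \<Phi> z / (\<beta> * \<Phi> z)) + \<sigma>)
      (\<lambda>z. \<beta> * h z + \<sigma>)"
    by (rule subordinate_eq_on_unit_disk)
  then have "subordinate (\<lambda>z. 1 + z * deriv \<Phi> z / (\<beta> * \<Phi> z)) h"
    by (rule subordinate_affine_cancel[OF assms(10)])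
  moreover have "\<phi> holomorphic_on unit_disk" "flat_to_order n \<phi>"
    using assms(5) by (auto simp: class_H1_def flat_to_order_def)
  ultimately show ?thesis
    unfolding F_op_eq_integral_operator \<Phi>_def[symmetric]
    using integral_operator_subordination[OF assms(1,8-11) \<Phi>(1-3) _ _ assms(7)] by blast
qed

end
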